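(* For every $n,m\in\mathbb N^*$, Hermitian $H_0,\dots,H_m\in\mathbb H_n$ and $h_1,\dots,h_m\in\mathbb R$: for every feasible point $X$ of SDP-$\mathbb R$ there exists a feasible point $\tilde X$ of SDP-$\mathbb R$ with $\tilde X_{11}=0$ and $\operatorname{Tr}(\Lambda(H_i)\tilde X)=\operatorname{Tr}(\Lambda(H_i)X)$ for all $i=0,\dots,m$. In particular, adding the constraint $X_{11}=0$ to SDP-$\mathbb R$ does not change its optimal value.
   Context: $\mathbb H_n$: Hermitian $n\times n$ matrices; $\mathbb S_{2n}$: real symmetric $2n\times2n$ matrices; $\Lambda(Z):=\begin{pmatrix}\operatorname{Re}Z&-\operatorname{Im}Z\\ \operatorname{Im}Z&\operatorname{Re}Z\end{pmatrix}$. SDP-$\mathbb R$: $\inf_{X\in\mathbb S_{2n}}\operatorname{Tr}(\Lambda(H_0)X)$ s.t. $\operatorname{Tr}(\Lambda(H_i)X)\le h_i$, $i=1,\dots,m$, and $X\succeq0$. *)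

theory Defs
  imports Complex_Main "HOL-Library.Extended_Real" "Jordan_Normal_Form.Matrix"
begin

definition hermitian_mat :: "nat \<Rightarrow> complex mat \<Rightarrow> bool" where
  "hermitian_mat n H \<longleftrightarrow> H \<in> carrier_mat n n \<and>
     (\<forall>i<n. \<forall>j<n. H $$ (i, j) = cnj (H $$ (j, i)))"

definition sym_mat :: "nat \<Rightarrow> real mat \<Rightarrow> bool" where
  "sym_mat k X \<longleftrightarrow> X \<in> carrier_mat k k \<and> transpose_mat X = X"

definition psd_mat :: "nat \<Rightarrow> real mat \<Rightarrow> bool" where
  "psd_mat k X \<longleftrightarrow> sym_mat k X \<and> (\<forall>v \<in> carrier_vec k. v \<bullet> (X *\<^sub>v v) \<ge> 0)"

definition mtrace :: "'a::comm_monoid_add mat \<Rightarrow> 'a" where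
  "mtrace A = (\<Sum>i<dim_row A. A $$ (i, i))"

definition Lam :: "complex mat \<Rightarrow> real mat" where
  "Lam Z = four_block_mat (map_mat Re Z) (map_mat (\<lambda>z. - Im z) Z)
                          (map_mat Im Z) (map_mat Re Z)"

definition sdpR_feasible ::
  "nat \<Rightarrow> nat \<Rightarrow> (nat \<Rightarrow> complex mat) \<Rightarrow> (nat \<Rightarrow> real) \<Rightarrow> real mat \<Rightarrow> bool" where
  "sdpR_feasible n m H h X \<longleftrightarrow> psd_mat (2 * n) X \<and>
     (\<forall>i\<in>{1..m}. mtrace (Lam (H i) * X) \<le> h i)"

end

theory Submission
  imports Defs
begin

text \<open>
  Write \<open>J = [[0, -I], [I, 0]]\<close> for the complex structure on \<open>\<real>\<^sup>2\<^sup>n\<close>; every \<open>Lam H\<close>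
  commutes with \<open>J\<close>. Averaging a feasible \<open>X\<close> with \<open>J\<^sup>T X J\<close> gives a positive semidefinite
  \<open>P\<close> commuting with \<open>J\<close> and with the same traces against all \<open>Lam H\<close>. With \<open>p = P e\<^sub>0\<close> and
  \<open>a = P\<^sub>0\<^sub>0\<close>, Cauchy-Schwarz gives \<open>p p\<^sup>T \<le> a P\<close>, so \<open>Y = P + (J p (J p)\<^sup>T - p p\<^sup>T) / a\<close>
  is still positive semidefinite. Since \<open>(J p)\<^sub>0 = -P\<^sub>n\<^sub>0 = 0\<close> we get \<open>Y\<^sub>0\<^sub>0 = 0\<close>, and the trace
  of \<open>Lam H\<close> against the rank-two correction is \<open>((J p)\<^sup>T Lam H (J p) - p\<^sup>T Lam H p) / a = 0\<close>.
\<close>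

lemma quadratic_nonneg_imp_discrim_nonpos:
  fixes a b c :: real
  assumes nonneg: "\<And>t. 0 \<le> a + 2 * b * t + c * t\<^sup>2"
  shows "b\<^sup>2 \<le> a * c"
proof -
  have "0 \<le> c"
  proof (rule ccontr)
    assume "\<not> 0 \<le> c"
    define t where "t = sqrt ((a + 1) / - c)"
    have "0 \<le> a" using nonneg[of 0] by simp
    then have "t\<^sup>2 = (a + 1) / - c" using \<open>\<not> 0 \<le> c\<close> by (simp add: t_def divide_nonneg_neg)
    then have "2 * a + 2 * c * t\<^sup>2 = - 2" using \<open>\<not> 0 \<le> c\<close> by (simp add: field_simps)
    then show False using nonneg[of t] nonneg[of "- t"] by simp
  qed
  show ?thesis
  proof (cases "c = 0")
    case True
    have "b = 0"
    proof (rule ccontr)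
      assume "b \<noteq> 0"
      then show False using nonneg[of "- (a + 1) / (2 * b)"] True by (simp add: field_simps)
    qed
    then show ?thesis using True by simp
  next
    case False
    then have "0 < c" using \<open>0 \<le> c\<close> by simp
    have "0 \<le> a + 2 * b * (- b / c) + c * (- b / c)\<^sup>2" by (rule nonneg)
    also have "\<dots> = (a * c - b\<^sup>2) / c" using \<open>0 < c\<close> by (simp add: field_simps power2_eq_square)
    finally show ?thesis using \<open>0 < c\<close> by (simp add: divide_nonneg_pos zero_le_divide_iff)
  qed
qed

text \<open>Square matrices are handled as entry functions; only entries with indices below \<open>N\<close> matter.\<close>

definition bilin_form :: "nat \<Rightarrow> (nat \<Rightarrow> nat \<Rightarrow> real) \<Rightarrow> (nat \<Rightarrow> real) \<Rightarrow> (nat \<Rightarrow> real) \<Rightarrow> real" where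
  "bilin_form N M u w = (\<Sum>i<N. \<Sum>j<N. u i * M i j * w j)"

definition psd_form :: "nat \<Rightarrow> (nat \<Rightarrow> nat \<Rightarrow> real) \<Rightarrow> bool" where
  "psd_form N M \<longleftrightarrow> (\<forall>i<N. \<forall>j<N. M i j = M j i) \<and> (\<forall>v. 0 \<le> bilin_form N M v v)"

definition trace_pair :: "nat \<Rightarrow> (nat \<Rightarrow> nat \<Rightarrow> real) \<Rightarrow> (nat \<Rightarrow> nat \<Rightarrow> real) \<Rightarrow> real" where
  "trace_pair N L M = (\<Sum>i<N. \<Sum>k<N. L i k * M k i)"

lemma bilin_form_add: "bilin_form N (\<lambda>i j. A i j + B i j) u w = bilin_form N A u w + bilin_form N B u w"
  by (simp add: bilin_form_def algebra_simps sum.distrib)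

lemma bilin_form_diff: "bilin_form N (\<lambda>i j. A i j - B i j) u w = bilin_form N A u w - bilin_form N B u w"
  by (simp add: bilin_form_def algebra_simps sum_subtractf)

lemma bilin_form_divide: "bilin_form N (\<lambda>i j. A i j / c) u w = bilin_form N A u w / c"
  by (simp add: bilin_form_def sum_divide_distrib)

lemma trace_pair_add: "trace_pair N L (\<lambda>i j. A i j + B i j) = trace_pair N L A + trace_pair N L B"
  by (simp add: trace_pair_def algebra_simps sum.distrib)

lemma trace_pair_diff: "trace_pair N L (\<lambda>i j. A i j - B i j) = trace_pair N L A - trace_pair N L B"
  by (simp add: trace_pair_def algebra_simps sum_subtractf)

lemma trace_pair_divide: "trace_pair N L (\<lambda>i j. A i j / c) = trace_pair N L A / c"
  by (simp add: trace_pair_def sum_divide_distrib)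

lemma bilin_form_outer: "bilin_form N (\<lambda>i j. p i * p j) v v = (\<Sum>j<N. p j * v j)\<^sup>2"
  by (simp add: bilin_form_def power2_eq_square sum_product algebra_simps)

lemma trace_pair_outer: "trace_pair N L (\<lambda>i j. q i * q j) = bilin_form N L q q"
  by (simp add: trace_pair_def bilin_form_def algebra_simps)

lemma bilin_form_commute:
  assumes "\<And>i j. i < N \<Longrightarrow> j < N \<Longrightarrow> M i j = M j i"
  shows "bilin_form N M w u = bilin_form N M u w"
  unfolding bilin_form_def using assms by (subst sum.swap) (simp add: algebra_simps)

lemma bilin_form_unit_right:
  assumes "k < N"
  shows "bilin_form N M u (\<lambda>j. if j = k then 1 else 0) = (\<Sum>i<N. u i * M i k)"
  unfolding bilin_form_def using assms by (simp add: if_distrib cong: if_cong)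

lemma bilin_form_cauchy_schwarz:
  assumes "psd_form N M"
  shows "(bilin_form N M u w)\<^sup>2 \<le> bilin_form N M u u * bilin_form N M w w"
proof (rule quadratic_nonneg_imp_discrim_nonpos)
  fix t
  have "bilin_form N M (\<lambda>i. u i + t * w i) (\<lambda>i. u i + t * w i)
      = bilin_form N M u u + t * bilin_form N M w u + t * bilin_form N M u w + t\<^sup>2 * bilin_form N M w w"
    by (simp add: bilin_form_def algebra_simps power2_eq_square sum.distrib sum_distrib_left)
  also have "\<dots> = bilin_form N M u u + 2 * bilin_form N M u w * t + bilin_form N M w w * t\<^sup>2"
    using assms bilin_form_commute[of N M w u] by (simp add: psd_form_def algebra_simps)
  finally show "0 \<le> bilin_form N M u u + 2 * bilin_form N M u w * t + bilin_form N M w w * t\<^sup>2"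
    using assms by (metis psd_form_def)
qed

text \<open>
  \<open>J_vec n v = J v\<close> and \<open>J_conj n M = J\<^sup>T M J\<close>, written entrywise:
  \<open>J e\<^sub>i = e\<^sub>i\<^sub>+\<^sub>n\<close> and \<open>J e\<^sub>i\<^sub>+\<^sub>n = - e\<^sub>i\<close> for \<open>i < n\<close>.
\<close>

definition cplx_swap :: "nat \<Rightarrow> nat \<Rightarrow> nat" where
  "cplx_swap n i = (if i < n then i + n else i - n)"

definition cplx_sign :: "nat \<Rightarrow> nat \<Rightarrow> real" where
  "cplx_sign n i = (if i < n then - 1 else 1)"

definition J_vec :: "nat \<Rightarrow> (nat \<Rightarrow> real) \<Rightarrow> nat \<Rightarrow> real" where
  "J_vec n v i = cplx_sign n i * v (cplx_swap n i)"

definition J_conj :: "nat \<Rightarrow> (nat \<Rightarrow> nat \<Rightarrow> real) \<Rightarrow> nat \<Rightarrow> nat \<Rightarrow> real" where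
  "J_conj n M i j = cplx_sign n i * cplx_sign n j * M (cplx_swap n i) (cplx_swap n j)"

definition J_invariant :: "nat \<Rightarrow> (nat \<Rightarrow> nat \<Rightarrow> real) \<Rightarrow> bool" where
  "J_invariant n M \<longleftrightarrow> (\<forall>i<2 * n. \<forall>j<2 * n. J_conj n M i j = M i j)"

lemma cplx_swap_less: "i < 2 * n \<Longrightarrow> cplx_swap n i < 2 * n"
  by (auto simp: cplx_swap_def)

lemma cplx_swap_swap: "i < 2 * n \<Longrightarrow> cplx_swap n (cplx_swap n i) = i"
  by (auto simp: cplx_swap_def)

lemma cplx_sign_swap: "i < 2 * n \<Longrightarrow> cplx_sign n (cplx_swap n i) = - cplx_sign n i"
  by (auto simp: cplx_sign_def cplx_swap_def)

lemma cplx_sign_square: "cplx_sign n i * cplx_sign n i = 1"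
  by (simp add: cplx_sign_def)

lemma sum_cplx_swap: "(\<Sum>i<2 * n. f (cplx_swap n i)) = (\<Sum>i<2 * n. f i)"
proof (rule sum.reindex_bij_betw)
  show "bij_betw (cplx_swap n) {..<2 * n} {..<2 * n}"
    by (rule bij_betwI[where g = "cplx_swap n"]) (auto simp: cplx_swap_less cplx_swap_swap)
qed

lemma sum2_cplx_swap:
  "(\<Sum>i<2 * n. \<Sum>j<2 * n. f (cplx_swap n i) (cplx_swap n j)) = (\<Sum>i<2 * n. \<Sum>j<2 * n. f i j)"
  by (simp add: sum_cplx_swap sum_cplx_swap[where f = "\<lambda>i. \<Sum>j<2 * n. f i j"])

lemma bilin_form_cong:
  "(\<And>i j. i < N \<Longrightarrow> j < N \<Longrightarrow> A i j = B i j) \<Longrightarrow> bilin_form N A u w = bilin_form N B u w"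
  by (simp add: bilin_form_def)

lemma trace_pair_cong:
  "(\<And>i j. i < N \<Longrightarrow> j < N \<Longrightarrow> L i j = L' i j) \<Longrightarrow> (\<And>i j. i < N \<Longrightarrow> j < N \<Longrightarrow> M i j = M' i j)
    \<Longrightarrow> trace_pair N L M = trace_pair N L' M'"
  by (simp add: trace_pair_def)

lemma bilin_form_J_conj:
  "bilin_form (2 * n) (J_conj n M) u w = bilin_form (2 * n) M (J_vec n u) (J_vec n w)"
proof -
  have "bilin_form (2 * n) (J_conj n M) u w
      = (\<Sum>i<2 * n. \<Sum>j<2 * n. J_vec n u (cplx_swap n i) * M (cplx_swap n i) (cplx_swap n j) * J_vec n w (cplx_swap n j))"
    unfolding bilin_form_def J_conj_def J_vec_def
    by (intro sum.cong refl) (simp add: cplx_swap_swap cplx_sign_swap)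
  also have "\<dots> = bilin_form (2 * n) M (J_vec n u) (J_vec n w)"
    unfolding bilin_form_def by (rule sum2_cplx_swap)
  finally show ?thesis .
qed

lemma trace_pair_J_conj: "trace_pair (2 * n) (J_conj n L) (J_conj n M) = trace_pair (2 * n) L M"
proof -
  have "trace_pair (2 * n) (J_conj n L) (J_conj n M)
      = (\<Sum>i<2 * n. \<Sum>k<2 * n. L (cplx_swap n i) (cplx_swap n k) * M (cplx_swap n k) (cplx_swap n i))"
    unfolding trace_pair_def J_conj_def
    by (intro sum.cong refl) (simp add: algebra_simps cplx_sign_square)
  also have "\<dots> = trace_pair (2 * n) L M"
    unfolding trace_pair_def by (rule sum2_cplx_swap)
  finally show ?thesis .
qed

lemma J_conj_J_conj: "i < 2 * n \<Longrightarrow> j < 2 * n \<Longrightarrow> J_conj n (J_conj n M) i j = M i j"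
  by (simp add: J_conj_def cplx_swap_less cplx_swap_swap cplx_sign_swap cplx_sign_square algebra_simps)

lemma bilin_form_J_vec:
  assumes "J_invariant n L"
  shows "bilin_form (2 * n) L (J_vec n u) (J_vec n w) = bilin_form (2 * n) L u w"
  using assms unfolding bilin_form_J_conj[symmetric] J_invariant_def by (intro bilin_form_cong) simp

lemma trace_pair_J_conj_right:
  assumes "J_invariant n L"
  shows "trace_pair (2 * n) L (J_conj n M) = trace_pair (2 * n) L M"
proof -
  have "trace_pair (2 * n) L (J_conj n M) = trace_pair (2 * n) (J_conj n L) (J_conj n M)"
    using assms unfolding J_invariant_def by (intro trace_pair_cong) simp_all
  then show ?thesis by (simp add: trace_pair_J_conj)
qed

lemma J_invariant_Lam:
  assumes "H \<in> carrier_mat n n"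
  shows "J_invariant n (\<lambda>i j. Lam H $$ (i, j))"
  unfolding J_invariant_def J_conj_def
  using assms by (auto simp: Lam_def cplx_swap_def cplx_sign_def)

lemma J_invariant_symmetric_vanish:
  assumes "J_invariant n P" "\<And>i j. i < 2 * n \<Longrightarrow> j < 2 * n \<Longrightarrow> P i j = P j i" "i < 2 * n"
  shows "P (cplx_swap n i) i = 0"
proof -
  let ?j = "cplx_swap n i"
  have "?j < 2 * n" using assms(3) by (rule cplx_swap_less)
  then have "P ?j i = cplx_sign n ?j * cplx_sign n i * P i ?j"
    using assms(1,3) cplx_swap_swap[OF assms(3)] unfolding J_invariant_def J_conj_def by metis
  also have "\<dots> = - P ?j i"
    using assms(2,3) \<open>?j < 2 * n\<close> by (simp add: cplx_sign_swap cplx_sign_square)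
  finally show ?thesis by simp
qed

definition J_average :: "nat \<Rightarrow> (nat \<Rightarrow> nat \<Rightarrow> real) \<Rightarrow> nat \<Rightarrow> nat \<Rightarrow> real" where
  "J_average n X i j = (X i j + J_conj n X i j) / 2"

lemma J_invariant_J_average: "J_invariant n (J_average n X)"
  unfolding J_invariant_def J_average_def J_conj_def
  by (simp add: J_conj_J_conj[unfolded J_conj_def] cplx_swap_less cplx_swap_swap cplx_sign_swap
      cplx_sign_square algebra_simps)

lemma psd_form_J_average:
  assumes "psd_form (2 * n) X"
  shows "psd_form (2 * n) (J_average n X)"
proof -
  have "0 \<le> bilin_form (2 * n) (J_average n X) v v" for v
  proof -
    have "bilin_form (2 * n) (J_average n X) v v
        = (bilin_form (2 * n) X v v + bilin_form (2 * n) X (J_vec n v) (J_vec n v)) / 2"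
      unfolding J_average_def[abs_def] bilin_form_divide bilin_form_add bilin_form_J_conj ..
    moreover have "0 \<le> bilin_form (2 * n) X u u" for u
      using assms by (simp add: psd_form_def)
    ultimately show ?thesis by (metis add_nonneg_nonneg divide_nonneg_pos zero_less_numeral)
  qed
  moreover have "J_average n X i j = J_average n X j i" if "i < 2 * n" "j < 2 * n" for i j
    using assms that cplx_swap_less by (simp add: psd_form_def J_average_def J_conj_def mult.commute)
  ultimately show ?thesis by (simp add: psd_form_def)
qed

lemma trace_pair_J_average:
  assumes "J_invariant n L"
  shows "trace_pair (2 * n) L (J_average n X) = trace_pair (2 * n) L X"
  unfolding J_average_def[abs_def] trace_pair_divide trace_pair_add trace_pair_J_conj_right[OF assms]
  by simp

text \<open>If \<open>P 0 0 = 0\<close>, division by zero leaves \<open>P\<close> unchanged, which is then already a solution.\<close>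

definition corner_correction :: "nat \<Rightarrow> (nat \<Rightarrow> nat \<Rightarrow> real) \<Rightarrow> nat \<Rightarrow> nat \<Rightarrow> real" where
  "corner_correction n P i j =
     P i j + (J_vec n (\<lambda>k. P k 0) i * J_vec n (\<lambda>k. P k 0) j - P i 0 * P j 0) / P 0 0"

lemma psd_form_corner_correction:
  assumes "0 < n" and P: "psd_form (2 * n) P"
  shows "psd_form (2 * n) (corner_correction n P)"
proof -
  let ?e = "\<lambda>j. if j = 0 then 1 else 0 :: real"
  have "0 \<le> bilin_form (2 * n) (corner_correction n P) v v" for v
  proof -
    define p where "p = (\<Sum>j<2 * n. P j 0 * v j)"
    define q where "q = (\<Sum>j<2 * n. J_vec n (\<lambda>k. P k 0) j * v j)"
    have form: "bilin_form (2 * n) (corner_correction n P) v v = bilin_form (2 * n) P v v + (q\<^sup>2 - p\<^sup>2) / P 0 0"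
      unfolding corner_correction_def[abs_def] bilin_form_add bilin_form_divide bilin_form_diff
        bilin_form_outer p_def q_def ..
    have Pve: "bilin_form (2 * n) P v ?e = p"
      using \<open>0 < n\<close> by (simp add: bilin_form_unit_right p_def mult.commute)
    have Pee: "bilin_form (2 * n) P ?e ?e = P 0 0"
    proof -
      have "(\<Sum>i<2 * n. ?e i * P i 0) = (\<Sum>i<2 * n. if i = 0 then P i 0 else 0)"
        by (intro sum.cong) auto
      then show ?thesis using \<open>0 < n\<close> by (simp add: bilin_form_unit_right)
    qed
    have cs: "p\<^sup>2 \<le> bilin_form (2 * n) P v v * P 0 0"
      using bilin_form_cauchy_schwarz[OF P, of v ?e] unfolding Pve Pee .
    have "0 \<le> P 0 0" "0 \<le> bilin_form (2 * n) P v v"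
      using P Pee by (metis psd_form_def)+
    show ?thesis
    proof (cases "P 0 0 = 0")
      case False
      with \<open>0 \<le> P 0 0\<close> have "p\<^sup>2 / P 0 0 \<le> bilin_form (2 * n) P v v"
        using cs by (simp add: divide_le_eq)
      moreover have "0 \<le> q\<^sup>2 / P 0 0" using \<open>0 \<le> P 0 0\<close> by simp
      ultimately show ?thesis unfolding form diff_divide_distrib by linarith
    qed (simp add: form \<open>0 \<le> bilin_form (2 * n) P v v\<close>)
  qed
  moreover have "corner_correction n P i j = corner_correction n P j i" if "i < 2 * n" "j < 2 * n" for i j
    using P that by (simp add: psd_form_def corner_correction_def mult.commute)
  ultimately show ?thesis by (simp add: psd_form_def)
qed

lemma corner_correction_corner:
  assumes "0 < n" "J_invariant n P" "\<And>i j. i < 2 * n \<Longrightarrow> j < 2 * n \<Longrightarrow> P i j = P j i"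
  shows "corner_correction n P 0 0 = 0"
proof -
  have "J_vec n (\<lambda>k. P k 0) 0 = 0"
    using J_invariant_symmetric_vanish[OF assms(2,3), of 0] assms(1) by (simp add: J_vec_def)
  then show ?thesis by (cases "P 0 0 = 0") (simp_all add: corner_correction_def)
qed

lemma trace_pair_corner_correction:
  assumes "J_invariant n L"
  shows "trace_pair (2 * n) L (corner_correction n P) = trace_pair (2 * n) L P"
  unfolding corner_correction_def[abs_def] trace_pair_add trace_pair_divide trace_pair_diff
    trace_pair_outer bilin_form_J_vec[OF assms]
  by simp

lemma scalar_prod_mult_mat_vec:
  assumes "X \<in> carrier_mat N N" "v \<in> carrier_vec N"
  shows "v \<bullet> (X *\<^sub>v v) = bilin_form N (\<lambda>i j. X $$ (i, j)) (\<lambda>i. v $ i) (\<lambda>i. v $ i)"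
  using assms by (simp add: bilin_form_def scalar_prod_def atLeast0LessThan sum_distrib_left algebra_simps)

lemma psd_mat_iff_psd_form:
  "psd_mat N X \<longleftrightarrow> X \<in> carrier_mat N N \<and> psd_form N (\<lambda>i j. X $$ (i, j))"
proof
  assume X: "psd_mat N X"
  then have carrier: "X \<in> carrier_mat N N" and tr: "transpose_mat X = X"
    by (simp_all add: psd_mat_def sym_mat_def)
  have "X $$ (i, j) = X $$ (j, i)" if "i < N" "j < N" for i j
    using that carrier by (metis tr carrier_matD index_transpose_mat(1))
  moreover have "0 \<le> bilin_form N (\<lambda>i j. X $$ (i, j)) v v" for v
    using X scalar_prod_mult_mat_vec[OF carrier, of "vec N v"]
    unfolding psd_mat_def by (simp add: bilin_form_def) (metis vec_carrier)
  ultimately show "X \<in> carrier_mat N N \<and> psd_form N (\<lambda>i j. X $$ (i, j))"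
    using carrier by (simp add: psd_form_def)
next
  assume "X \<in> carrier_mat N N \<and> psd_form N (\<lambda>i j. X $$ (i, j))"
  then show "psd_mat N X"
    by (auto simp: psd_mat_def sym_mat_def psd_form_def scalar_prod_mult_mat_vec intro!: eq_matI)
qed

lemma psd_mat_of_psd_form:
  assumes "psd_form N F"
  shows "psd_mat N (mat N N (\<lambda>(i, j). F i j))"
proof -
  have "bilin_form N (\<lambda>i j. mat N N (\<lambda>(i, j). F i j) $$ (i, j)) v v = bilin_form N F v v" for v
    by (intro bilin_form_cong) simp
  then show ?thesis
    using assms by (simp add: psd_mat_iff_psd_form psd_form_def)
qed

lemma mtrace_mult:
  assumes "A \<in> carrier_mat N N" "B \<in> carrier_mat N N"
  shows "mtrace (A * B) = trace_pair N (\<lambda>i j. A $$ (i, j)) (\<lambda>i j. B $$ (i, j))"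
  using assms by (simp add: mtrace_def trace_pair_def scalar_prod_def atLeast0LessThan)

lemma Lam_carrier: "H \<in> carrier_mat n n \<Longrightarrow> Lam H \<in> carrier_mat (2 * n) (2 * n)"
  unfolding Lam_def mult_2 by (rule four_block_carrier_mat) auto

lemma psd_mat_zero_corner_same_Lam_traces:
  assumes "0 < n" and X: "psd_mat (2 * n) X"
  shows "\<exists>Y. psd_mat (2 * n) Y \<and> Y $$ (0, 0) = 0 \<and>
           (\<forall>H \<in> carrier_mat n n. mtrace (Lam H * Y) = mtrace (Lam H * X))"
proof -
  define P where "P = J_average n (\<lambda>i j. X $$ (i, j))"
  define Y where "Y = mat (2 * n) (2 * n) (\<lambda>(i, j). corner_correction n P i j)"
  have carrier: "X \<in> carrier_mat (2 * n) (2 * n)" and "psd_form (2 * n) (\<lambda>i j. X $$ (i, j))"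
    using X by (simp_all add: psd_mat_iff_psd_form)
  from this(2) have P: "psd_form (2 * n) P"
    unfolding P_def by (rule psd_form_J_average)
  have "psd_mat (2 * n) Y"
    unfolding Y_def by (rule psd_mat_of_psd_form[OF psd_form_corner_correction[OF \<open>0 < n\<close> P]])
  moreover have "Y $$ (0, 0) = 0"
    using P \<open>0 < n\<close> corner_correction_corner[OF \<open>0 < n\<close> J_invariant_J_average]
    by (simp add: Y_def P_def psd_form_def)
  moreover have "mtrace (Lam H * Y) = mtrace (Lam H * X)" if H: "H \<in> carrier_mat n n" for H
  proof -
    let ?L = "\<lambda>i j. Lam H $$ (i, j)"
    have "mtrace (Lam H * Y) = trace_pair (2 * n) ?L (\<lambda>i j. Y $$ (i, j))"
      by (rule mtrace_mult[OF Lam_carrier[OF H]]) (simp add: Y_def)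
    also have "\<dots> = trace_pair (2 * n) ?L (corner_correction n P)"
      by (intro trace_pair_cong) (simp_all add: Y_def)
    also have "\<dots> = trace_pair (2 * n) ?L (\<lambda>i j. X $$ (i, j))"
      unfolding trace_pair_corner_correction[OF J_invariant_Lam[OF H]] P_def
      by (rule trace_pair_J_average[OF J_invariant_Lam[OF H]])
    also have "\<dots> = mtrace (Lam H * X)"
      by (rule mtrace_mult[OF Lam_carrier[OF H] carrier, symmetric])
    finally show ?thesis .
  qed
  ultimately show ?thesis by blast
qed


theorem mainTheorem18:
  fixes n m :: nat and H :: "nat \<Rightarrow> complex mat" and h :: "nat \<Rightarrow> real"
  assumes "n \<ge> 1" and "m \<ge> 1"
    and "\<forall>i\<le>m. hermitian_mat n (H i)"
  shows "(\<forall>X. sdpR_feasible n m H h X \<longrightarrow>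
            (\<exists>Y. sdpR_feasible n m H h Y \<and> Y $$ (0, 0) = 0 \<and>
                 (\<forall>i\<le>m. mtrace (Lam (H i) * Y) = mtrace (Lam (H i) * X))))
       \<and> (INF X \<in> {X. sdpR_feasible n m H h X}. ereal (mtrace (Lam (H 0) * X)))
         = (INF X \<in> {X. sdpR_feasible n m H h X \<and> X $$ (0, 0) = 0}.
              ereal (mtrace (Lam (H 0) * X)))"
proof -
  have zero_corner: "\<exists>Y. sdpR_feasible n m H h Y \<and> Y $$ (0, 0) = 0 \<and>
                 (\<forall>i\<le>m. mtrace (Lam (H i) * Y) = mtrace (Lam (H i) * X))"
    if X: "sdpR_feasible n m H h X" for X
  proof -
    obtain Y where Y: "psd_mat (2 * n) Y" "Y $$ (0, 0) = 0"
      "\<forall>K \<in> carrier_mat n n. mtrace (Lam K * Y) = mtrace (Lam K * X)"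
      using psd_mat_zero_corner_same_Lam_traces[of n X] assms(1) X by (auto simp: sdpR_feasible_def)
    have "\<forall>i\<le>m. mtrace (Lam (H i) * Y) = mtrace (Lam (H i) * X)"
      using Y(3) assms(3) by (simp add: hermitian_mat_def)
    then show ?thesis using X Y(1,2) by (auto simp: sdpR_feasible_def)
  qed
  moreover have "(INF X \<in> {X. sdpR_feasible n m H h X}. ereal (mtrace (Lam (H 0) * X)))
      = (INF X \<in> {X. sdpR_feasible n m H h X \<and> X $$ (0, 0) = 0}. ereal (mtrace (Lam (H 0) * X)))"
  proof (rule INF_eq)
    fix X assume "X \<in> {X. sdpR_feasible n m H h X}"
    then show "\<exists>Y\<in>{X. sdpR_feasible n m H h X \<and> X $$ (0, 0) = 0}.
        ereal (mtrace (Lam (H 0) * Y)) \<le> ereal (mtrace (Lam (H 0) * X))"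
      using zero_corner by fastforce
  qed auto
  ultimately show ?thesis by blast
qed

end
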